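(* Let $1\le j\le k$. Let $\alpha=(\alpha_1,\dots,\alpha_j,0,\dots,0)\in\mathbb N^k$ (the last $k-j$ entries are zero) and $\beta=(\beta_1,\dots,\beta_k)\in\mathbb P^k$. Then for $t\ge0$ and $\mathrm{Re}(z)<0$, $$\phi\tbinom{\alpha}{\beta}(t)=\phi\tbinom{\alpha_1,\dots,\alpha_{j-1},\alpha_j}{\beta_1,\dots,\beta_{j-1},\beta_j+\beta_{j+1}+\cdots+\beta_k}(t)\;\cdot\;\phi\tbinom{0,\dots,0}{\beta_{j+1},\dots,\beta_k}(0).$$ Here the last factor has $k-j$ columns and is interpreted as $1$ when $j=k$.
   Context: $\mathbb P$ denotes the positive and $\mathbb N$ the nonnegative integers. Let $X=\{x_i:i\in\mathbb P\}$ be commuting indeterminates. For $\gamma\in\mathbb N^m$, $\mu\in\mathbb P^m$, real $t\ge0$ and complex $z$ with $\mathrm{Re}(z)<0$, define $$\phi\tbinom{\gamma}{\mu}(t)=\sum_{0<i_1<\cdots<i_m}x_{i_1}^{\gamma_1}\cdots x_{i_m}^{\gamma_m}e^{(i_1+t)\mu_1z}\cdots e^{(i_m+t)\mu_mz}.$$ The coefficient of each monomial in $X$ is an absolutely convergent series. The empty case $m=0$ gives $1$. *)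

theory Defs
  imports "HOL-Analysis.Analysis"
begin

text \<open>Formal series in the commuting indeterminates x_1, x_2, ... with complex
coefficients are represented by their coefficient functions: a monomial is an
exponent vector e :: nat \<Rightarrow> nat (e n = exponent of x_n), and a series is
a function from monomials to complex numbers.\<close>

type_synonym fseries = "(nat \<Rightarrow> nat) \<Rightarrow> complex"

definition idx_tuples :: "nat \<Rightarrow> nat list set" where
  "idx_tuples m = {is. length is = m \<and> sorted_wrt (<) is \<and> (\<forall>i\<in>set is. 0 < i)}"

definition monom_of :: "nat list \<Rightarrow> nat list \<Rightarrow> (nat \<Rightarrow> nat)" where
  "monom_of g is = (\<lambda>n. \<Sum>l<length is. if is ! l = n then g ! l else 0)"

definition phi :: "nat list \<Rightarrow> nat list \<Rightarrow> real \<Rightarrow> complex \<Rightarrow> fseries" where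
  "phi g mu t z = (\<lambda>e. infsum
     (\<lambda>is. \<Prod>l<length g. exp (complex_of_real (real (is ! l) + t) * of_nat (mu ! l) * z))
     {is \<in> idx_tuples (length g). monom_of g is = e})"

definition series_mult :: "fseries \<Rightarrow> fseries \<Rightarrow> fseries" where
  "series_mult f h = (\<lambda>e. \<Sum>d\<in>{d. d \<le> e}. f d * h (e - d))"

end

theory Submission
  imports Defs
begin

(* An index tuple 0 < i_1 < ... < i_k is the same as the pair of tuples (i_1, ..., i_j) and
   (m_1, ..., m_(k-j)) with m_l = i_(j+l) - i_j, the latter again an arbitrary increasing tuple of
   positive integers. Since the last k - j exponents vanish, the monomial only sees the first
   tuple, and writing i_(j+l) = i_j + m_l moves the factors e^(i_j beta_(j+l) z) into the j-th
   column, leaving e^(m_l beta_(j+l) z). The bound |e^((i + t) mu z)| <= (e^(Re z))^i gives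
   absolute convergence, so the sum over the product of the two index sets factors. The second
   factor is a constant series, so the Cauchy product reduces to a single term. *)

lemma abs_summable_on_Times:
  fixes f g :: "_ \<Rightarrow> 'c::{real_normed_div_algebra,banach}"
  assumes f: "(\<lambda>x. norm (f x)) summable_on A" and g: "(\<lambda>y. norm (g y)) summable_on B"
  shows "(\<lambda>p. norm (f (fst p) * g (snd p))) summable_on A \<times> B"
proof -
  have "(\<lambda>(x, y). norm (f x) * norm (g y)) summable_on A \<times> B"
  proof (rule summable_on_SigmaI)
    show "(\<lambda>x. norm (f x) * infsum (\<lambda>y. norm (g y)) B) summable_on A"
      using f by (rule summable_on_cmult_left)
  qed (use g in \<open>auto intro: has_sum_cmult_right\<close>)
  then show ?thesis
    by (simp add: case_prod_unfold norm_mult)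
qed

lemma infsum_Times_mult:
  fixes f g :: "_ \<Rightarrow> 'c::{real_normed_div_algebra,banach}"
  assumes f: "(\<lambda>x. norm (f x)) summable_on A" and g: "(\<lambda>y. norm (g y)) summable_on B"
  shows "(\<Sum>\<^sub>\<infinity>(x, y)\<in>A \<times> B. f x * g y) = infsum f A * infsum g B"
proof -
  have "(\<lambda>(x, y). f x * g y) summable_on A \<times> B"
    using abs_summable_summable[OF abs_summable_on_Times[OF f g]] by (simp add: case_prod_unfold)
  then have "(\<Sum>\<^sub>\<infinity>(x, y)\<in>A \<times> B. f x * g y) = (\<Sum>\<^sub>\<infinity>x\<in>A. \<Sum>\<^sub>\<infinity>y\<in>B. f x * g y)"
    by (rule infsum_Sigma'_banach[symmetric])
  also have "\<dots> = infsum f A * infsum g B"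
    using f g by (simp add: abs_summable_summable infsum_cmult_right infsum_cmult_left)
  finally show ?thesis .
qed

lemma summable_on_power_sum_list:
  fixes r :: real
  assumes "0 \<le> r" "r < 1"
  shows "(\<lambda>xs. r ^ sum_list xs) summable_on {xs. length xs = n}"
proof (induction n)
  case 0
  have "{xs::nat list. length xs = 0} = {[]}" by auto
  then show ?case by simp
next
  case (Suc n)
  have geometric: "(\<lambda>x::nat. r ^ x) summable_on UNIV"
    using assms by (subst summable_on_UNIV_nonneg_real_iff) auto
  have "bij_betw (\<lambda>(x, xs). x # xs) (UNIV \<times> {xs. length xs = n}) {xs. length xs = Suc n}"
    by (rule bij_betwI[where g = "\<lambda>xs. (hd xs, tl xs)"]) (auto simp: length_Suc_conv)
  moreover have "(\<lambda>p. norm (r ^ fst p * r ^ sum_list (snd p))) summable_on UNIV \<times> {xs. length xs = n}"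
    using geometric Suc.IH assms by (intro abs_summable_on_Times) simp_all
  ultimately show ?case
    using assms by (subst summable_on_reindex_bij_betw[symmetric]) (auto simp: case_prod_unfold power_add)
qed

lemma bij_betw_Collect:
  assumes "bij_betw f A B" "\<And>x. x \<in> A \<Longrightarrow> Q (f x) \<longleftrightarrow> P x"
  shows "bij_betw f {x \<in> A. P x} {y \<in> B. Q y}"
  using assms by (auto simp: bij_betw_def inj_on_def image_iff)

lemma sum_lessThan_add: "(\<Sum>l<m + n. f l) = (\<Sum>l<m. f l) + (\<Sum>l<n. f (m + l))"
  for m n :: nat
  by (induction n) (simp_all add: add.assoc)

lemma finite_le_fun_finite_support:
  fixes e :: "'a \<Rightarrow> nat"
  assumes "finite {n. e n \<noteq> 0}"
  shows "finite {d. d \<le> e}"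
proof (rule inj_on_finite)
  let ?S = "{n. e n \<noteq> 0}"
  show "inj_on (\<lambda>d. restrict d ?S) {d. d \<le> e}"
  proof (rule inj_onI, rule ext)
    fix d1 d2 n
    assume "d1 \<in> {d. d \<le> e}" "d2 \<in> {d. d \<le> e}" "restrict d1 ?S = restrict d2 ?S"
    then show "d1 n = d2 n"
      using le_funD[of d1 e n] le_funD[of d2 e n] by (cases "e n = 0") (auto dest: fun_cong[of _ _ n])
  qed
  show "(\<lambda>d. restrict d ?S) ` {d. d \<le> e} \<subseteq> (\<Pi>\<^sub>E n\<in>?S. {..e n})"
    by (intro image_subsetI) (simp add: le_fun_def restrict_PiE_iff)
  show "finite (\<Pi>\<^sub>E n\<in>?S. {..e n})"
    using assms by (intro finite_PiE) auto
qed

(* At a monomial e of infinite support the sum defining series_mult ranges over an infinite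
   set and is 0, whence the second hypothesis. *)

lemma series_mult_constant_right:
  assumes "\<And>d. d \<noteq> (\<lambda>_. 0) \<Longrightarrow> h d = 0" and "infinite {d. d \<le> e} \<Longrightarrow> f e = 0"
  shows "series_mult f h e = f e * h (\<lambda>_. 0)"
proof (cases "finite {d. d \<le> e}")
  case True
  have "e - d \<noteq> (\<lambda>_. 0)" if "d \<le> e" "d \<noteq> e" for d
    using that by (auto simp: le_fun_def fun_eq_iff intro: antisym)
  then have "series_mult f h e = (\<Sum>d\<in>{d. d \<le> e}. if d = e then f e * h (\<lambda>_. 0) else 0)"
    unfolding series_mult_def using assms(1) by (intro sum.cong) (auto simp: fun_diff_def)
  also have "\<dots> = f e * h (\<lambda>_. 0)"
    using True by (simp add: sum.delta')
  finally show ?thesis .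
next
  case False
  then show ?thesis
    using assms(2) by (simp add: series_mult_def)
qed

lemma sorted_wrt_nth_less_set_drop:
  assumes "sorted_wrt (<) xs" "0 < n" "n \<le> length xs" "x \<in> set (drop n xs)"
  shows "xs ! (n - 1) < x"
proof -
  have "xs ! (n - 1) \<in> set (take n xs)"
    using assms(2,3) by (auto simp: in_set_conv_nth intro!: exI[of _ "n - 1"])
  then show ?thesis
    using assms(1,4) sorted_wrt_append[of "(<)" "take n xs" "drop n xs"] by simp
qed

lemma append_shifted_in_idx_tuples:
  assumes "p \<in> idx_tuples n" "m \<in> idx_tuples L"
  shows "p @ map ((+) (last p)) m \<in> idx_tuples (n + L)"
proof -
  have "x \<le> last p" if "x \<in> set p" for x
    using assms(1) that
    by (cases p rule: rev_cases) (auto simp: idx_tuples_def sorted_wrt_append)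
  then show ?thesis
    using assms by (fastforce simp: idx_tuples_def sorted_wrt_append sorted_wrt_map)
qed

lemma idx_tuples_split:
  assumes "is": "is \<in> idx_tuples (n + L)" and "0 < n"
  defines "c \<equiv> is ! (n - 1)"
  shows "take n is \<in> idx_tuples n" and "map (\<lambda>x. x - c) (drop n is) \<in> idx_tuples L"
    and "take n is @ map ((+) (last (take n is))) (map (\<lambda>x. x - c) (drop n is)) = is"
proof -
  have sorted: "sorted_wrt (<) is" and len: "length is = n + L"
    using "is" by (auto simp: idx_tuples_def)
  have above: "c < x" if "x \<in> set (drop n is)" for x
    using sorted_wrt_nth_less_set_drop[OF sorted \<open>0 < n\<close> _ that] len by (simp add: c_def)
  show "take n is \<in> idx_tuples n"
    using "is" by (auto simp: idx_tuples_def sorted_wrt_take dest: in_set_takeD)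
  have "sorted_wrt (\<lambda>x y. x - c < y - c) (drop n is)"
    using sorted_wrt_drop[OF sorted, of n]
    by (rule sorted_wrt_mono_rel[rotated]) (auto intro: diff_less_mono above less_imp_le)
  then show "map (\<lambda>x. x - c) (drop n is) \<in> idx_tuples L"
    using len above by (auto simp: idx_tuples_def sorted_wrt_map)
  have "last (take n is) = c"
    using \<open>0 < n\<close> len by (subst last_conv_nth) (auto simp: c_def)
  moreover have "map (\<lambda>x. c + (x - c)) (drop n is) = drop n is"
    using above by (intro map_idI) (simp add: less_imp_le)
  ultimately show "take n is @ map ((+) (last (take n is))) (map (\<lambda>x. x - c) (drop n is)) = is"
    by (simp add: comp_def)
qed

lemma bij_betw_idx_tuples_append_shifted:
  assumes "0 < n"
  shows "bij_betw (\<lambda>(p, m). p @ map ((+) (last p)) m) (idx_tuples n \<times> idx_tuples L) (idx_tuples (n + L))"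
proof (rule bij_betwI[where g = "\<lambda>is. (take n is, map (\<lambda>x. x - is ! (n - 1)) (drop n is))"])
  show "(\<lambda>(p, m). p @ map ((+) (last p)) m) \<in> idx_tuples n \<times> idx_tuples L \<rightarrow> idx_tuples (n + L)"
    using append_shifted_in_idx_tuples by auto
  show "(\<lambda>is. (take n is, map (\<lambda>x. x - is ! (n - 1)) (drop n is))) \<in> idx_tuples (n + L) \<rightarrow> idx_tuples n \<times> idx_tuples L"
    using idx_tuples_split(1,2) assms by auto
  show "(\<lambda>(p, m). p @ map ((+) (last p)) m) ((\<lambda>is. (take n is, map (\<lambda>x. x - is ! (n - 1)) (drop n is))) is) = is"
    if "is \<in> idx_tuples (n + L)" for "is"
    using idx_tuples_split(3)[OF that assms] by simp
next
  fix pm assume "pm \<in> idx_tuples n \<times> idx_tuples L"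
  then obtain p m where pm: "pm = (p, m)" "length p = n" "p \<noteq> []"
    using assms by (cases pm) (auto simp: idx_tuples_def)
  then have "p ! (n - 1) = last p"
    by (simp add: last_conv_nth)
  then show "(\<lambda>is. (take n is, map (\<lambda>x. x - is ! (n - 1)) (drop n is))) ((\<lambda>(p, m). p @ map ((+) (last p)) m) pm) = pm"
    using pm assms by (simp add: nth_append comp_def)
qed

lemma monom_of_append_zeros:
  assumes "length p = length a" "length q = L"
  shows "monom_of (a @ replicate L 0) (p @ q) = monom_of a p"
proof
  fix n
  let ?a0 = "a @ replicate L 0"
  have "monom_of ?a0 (p @ q) n = (\<Sum>l<length p. if (p @ q) ! l = n then ?a0 ! l else 0)
      + (\<Sum>l<length q. if (p @ q) ! (length p + l) = n then ?a0 ! (length p + l) else 0)"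
    unfolding monom_of_def length_append sum_lessThan_add ..
  also have "(\<Sum>l<length p. if (p @ q) ! l = n then ?a0 ! l else 0) = monom_of a p n"
    unfolding monom_of_def using assms(1) by (intro sum.cong) (auto simp: nth_append)
  also have "(\<Sum>l<length q. if (p @ q) ! (length p + l) = n then ?a0 ! (length p + l) else 0) = 0"
    using assms by (intro sum.neutral) auto
  finally show "monom_of ?a0 (p @ q) n = monom_of a p n"
    by simp
qed

lemma monom_of_replicate_0: "length is = L \<Longrightarrow> monom_of (replicate L 0) is = (\<lambda>_. 0)"
  by (simp add: monom_of_def fun_eq_iff)

lemma finite_le_monom_of: "finite {d. d \<le> monom_of g is}"
proof (rule finite_le_fun_finite_support)
  have "{n. monom_of g is n \<noteq> 0} \<subseteq> set is"
    by (auto simp: monom_of_def dest: sum.not_neutral_contains_not_neutral)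
  then show "finite {n. monom_of g is n \<noteq> 0}"
    by (rule finite_subset) simp
qed

definition phi_exponent :: "nat list \<Rightarrow> real \<Rightarrow> nat list \<Rightarrow> real" where
  "phi_exponent mu t is = (\<Sum>l<length is. (real (is ! l) + t) * real (mu ! l))"

lemma phi_eq_infsum_exp:
  "phi g mu t z e = (\<Sum>\<^sub>\<infinity>is\<in>{is \<in> idx_tuples (length g). monom_of g is = e}.
                        exp (complex_of_real (phi_exponent mu t is) * z))"
  unfolding phi_def
proof (rule infsum_cong)
  fix "is" assume "is \<in> {is \<in> idx_tuples (length g). monom_of g is = e}"
  then have "length is = length g"
    by (simp add: idx_tuples_def)
  then show "(\<Prod>l<length g. exp (complex_of_real (real (is ! l) + t) * of_nat (mu ! l) * z))
           = exp (complex_of_real (phi_exponent mu t is) * z)"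
    by (simp add: phi_exponent_def exp_sum sum_distrib_right)
qed

lemma sum_list_le_phi_exponent:
  assumes "\<forall>b\<in>set mu. 0 < b" "length is = length mu" "0 \<le> t"
  shows "real (sum_list is) \<le> phi_exponent mu t is"
proof -
  have "real (sum_list is) = (\<Sum>l<length is. real (is ! l))"
    by (simp add: sum_list_sum_nth atLeast0LessThan)
  also have "\<dots> \<le> phi_exponent mu t is"
    unfolding phi_exponent_def
  proof (rule sum_mono)
    fix l assume "l \<in> {..<length is}"
    then have "1 \<le> real (mu ! l)"
      using assms(1,2) by (simp add: Suc_le_eq)
    then have "(real (is ! l) + t) * 1 \<le> (real (is ! l) + t) * real (mu ! l)"
      using assms(3) by (intro mult_left_mono) auto
    then show "real (is ! l) \<le> (real (is ! l) + t) * real (mu ! l)"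
      using assms(3) by simp
  qed
  finally show ?thesis .
qed

lemma abs_summable_phi_terms:
  assumes "\<forall>b\<in>set mu. 0 < b" "0 \<le> t" "Re z < 0" "S \<subseteq> {is. length is = length mu}"
  shows "(\<lambda>is. norm (exp (complex_of_real (phi_exponent mu t is) * z))) summable_on S"
proof (rule summable_on_comparison_test)
  show "(\<lambda>is. exp (Re z) ^ sum_list is) summable_on S"
    using summable_on_power_sum_list[of "exp (Re z)" "length mu"] assms(3,4)
    by (auto intro: summable_on_subset_banach)
  fix "is" :: "nat list" assume "is \<in> S"
  then have "real (sum_list is) * Re z \<ge> phi_exponent mu t is * Re z"
    using sum_list_le_phi_exponent assms by (intro mult_right_mono_neg) auto
  then show "norm (exp (complex_of_real (phi_exponent mu t is) * z)) \<le> exp (Re z) ^ sum_list is"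
    by (simp add: exp_of_nat_mult[symmetric])
qed simp

lemma phi_exponent_append:
  assumes "length p = length mu"
  shows "phi_exponent (mu @ nu) t (p @ q) = phi_exponent mu t p + phi_exponent nu t q"
  using assms by (simp add: phi_exponent_def sum_lessThan_add nth_append)

lemma phi_exponent_shift: "phi_exponent nu t (map ((+) c) m) = phi_exponent nu (real c + t) m"
  by (simp add: phi_exponent_def add_ac)

lemma phi_exponent_offset:
  assumes "length m = length nu"
  shows "phi_exponent nu s m = phi_exponent nu 0 m + s * real (sum_list nu)"
  using assms
  by (simp add: phi_exponent_def sum_list_sum_nth atLeast0LessThan sum_distrib_left
      flip: sum.distrib) (simp add: algebra_simps)

lemma phi_exponent_append_shifted:
  assumes "length p = length mu" "p \<noteq> []" "length m = length nu"
  shows "phi_exponent (mu @ nu) t (p @ map ((+) (last p)) m)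
       = phi_exponent (butlast mu @ [last mu + sum_list nu]) t p + phi_exponent nu 0 m"
proof -
  obtain p' c where p: "p = p' @ [c]"
    using assms(2) by (cases p rule: rev_cases) auto
  obtain mu' b where mu: "mu = mu' @ [b]"
    using assms(1,2) by (cases mu rule: rev_cases) auto
  have len: "length p' = length mu'"
    using assms(1) p mu by simp
  have singleton: "phi_exponent [b'] t [c] = (real c + t) * real b'" for b'
    by (simp add: phi_exponent_def)
  have "phi_exponent (mu @ nu) t (p @ map ((+) c) m) = phi_exponent mu t p + phi_exponent nu (real c + t) m"
    using assms(1) by (simp add: phi_exponent_append phi_exponent_shift)
  also have "\<dots> = phi_exponent mu' t p' + (real c + t) * real (b + sum_list nu) + phi_exponent nu 0 m"
  proof -
    have "phi_exponent mu t p = phi_exponent mu' t p' + (real c + t) * real b"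
      using len by (simp add: p mu phi_exponent_append singleton)
    moreover have "phi_exponent nu (real c + t) m = phi_exponent nu 0 m + (real c + t) * real (sum_list nu)"
      using assms(3) by (rule phi_exponent_offset)
    ultimately show ?thesis
      by (simp add: distrib_left)
  qed
  also have "\<dots> = phi_exponent (mu' @ [b + sum_list nu]) t p + phi_exponent nu 0 m"
    using len by (simp add: p phi_exponent_append singleton)
  finally show ?thesis
    by (simp add: p mu)
qed

lemma bij_betw_monom_of_append_zeros:
  assumes "a \<noteq> []"
  shows "bij_betw (\<lambda>(p, m). p @ map ((+) (last p)) m)
           ({p \<in> idx_tuples (length a). monom_of a p = e} \<times> idx_tuples L)
           {is \<in> idx_tuples (length a + L). monom_of (a @ replicate L 0) is = e}"
proof -
  have "{pm \<in> idx_tuples (length a) \<times> idx_tuples L. monom_of a (fst pm) = e}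
      = {p \<in> idx_tuples (length a). monom_of a p = e} \<times> idx_tuples L"
    by auto
  moreover have "bij_betw (\<lambda>(p, m). p @ map ((+) (last p)) m)
      {pm \<in> idx_tuples (length a) \<times> idx_tuples L. monom_of a (fst pm) = e}
      {is \<in> idx_tuples (length a + L). monom_of (a @ replicate L 0) is = e}"
    using assms by (intro bij_betw_Collect bij_betw_idx_tuples_append_shifted)
      (auto simp: idx_tuples_def monom_of_append_zeros)
  ultimately show ?thesis
    by simp
qed

lemma phi_eq_0_if_infinite_le:
  assumes "infinite {d. d \<le> e}"
  shows "phi g mu t z e = 0"
proof -
  have "{is \<in> idx_tuples (length g). monom_of g is = e} = {}"
    using assms finite_le_monom_of by blast
  then show ?thesis
    unfolding phi_def by (simp only: infsum_empty)
qed

lemma phi_replicate_0_nonconstant: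
  assumes "e \<noteq> (\<lambda>_. 0)"
  shows "phi (replicate L 0) mu t z e = 0"
proof -
  have "{is \<in> idx_tuples L. monom_of (replicate L 0) is = e} = {}"
    using assms monom_of_replicate_0 by (auto simp: idx_tuples_def)
  then show ?thesis
    unfolding phi_def length_replicate by (simp only: infsum_empty)
qed

lemma phi_replicate_0_constant:
  "phi (replicate L 0) mu t z (\<lambda>_. 0)
     = (\<Sum>\<^sub>\<infinity>is\<in>idx_tuples L. exp (complex_of_real (phi_exponent mu t is) * z))"
proof -
  have "{is \<in> idx_tuples L. monom_of (replicate L 0) is = (\<lambda>_. 0)} = idx_tuples L"
    using monom_of_replicate_0 by (auto simp: idx_tuples_def)
  then show ?thesis
    by (simp add: phi_eq_infsum_exp)
qed

lemma phi_append_zeros_coeff: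
  assumes "length a = length mu" "mu \<noteq> []" "\<forall>b\<in>set (mu @ nu). 0 < b" "0 \<le> t" "Re z < 0"
  shows "phi (a @ replicate (length nu) 0) (mu @ nu) t z e
       = phi a (butlast mu @ [last mu + sum_list nu]) t z e * phi (replicate (length nu) 0) nu 0 z (\<lambda>_. 0)"
proof -
  define mu' where "mu' = butlast mu @ [last mu + sum_list nu]"
  define w where "w mu s is = exp (complex_of_real (phi_exponent mu s is) * z)" for mu s "is"
  define A where "A = {p \<in> idx_tuples (length a). monom_of a p = e}"
  define B where "B = idx_tuples (length nu)"
  have "a \<noteq> []"
    using assms(1,2) by auto
  then have "phi (a @ replicate (length nu) 0) (mu @ nu) t z e
      = (\<Sum>\<^sub>\<infinity>(p, m)\<in>A \<times> B. w (mu @ nu) t (p @ map ((+) (last p)) m))"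
    unfolding A_def B_def
    by (simp add: phi_eq_infsum_exp w_def case_prod_unfold
        infsum_reindex_bij_betw[OF bij_betw_monom_of_append_zeros, symmetric])
  also have "\<dots> = (\<Sum>\<^sub>\<infinity>(p, m)\<in>A \<times> B. w mu' t p * w nu 0 m)"
  proof -
    have "w (mu @ nu) t (p @ map ((+) (last p)) m) = w mu' t p * w nu 0 m" if "(p, m) \<in> A \<times> B" for p m
    proof -
      have "length p = length mu" "p \<noteq> []" "length m = length nu"
        using that assms(1,2) by (auto simp: A_def B_def idx_tuples_def)
      then show ?thesis
        by (simp add: w_def mu'_def phi_exponent_append_shifted exp_add distrib_right)
    qed
    then show ?thesis
      by (intro infsum_cong) auto
  qed
  also have "\<dots> = infsum (w mu' t) A * infsum (w nu 0) B"
  proof (rule infsum_Times_mult)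
    have "\<forall>b\<in>set mu'. 0 < b"
      using assms(2,3) by (auto simp: mu'_def dest: in_set_butlastD)
    then show "(\<lambda>p. norm (w mu' t p)) summable_on A"
      unfolding w_def using assms(4,5)
      by (rule abs_summable_phi_terms) (use assms(1,2) in \<open>auto simp: A_def mu'_def idx_tuples_def\<close>)
    show "(\<lambda>m. norm (w nu 0 m)) summable_on B"
      unfolding w_def using assms(3,5)
      by (intro abs_summable_phi_terms) (auto simp: B_def idx_tuples_def)
  qed
  also have "\<dots> = phi a mu' t z e * phi (replicate (length nu) 0) nu 0 z (\<lambda>_. 0)"
    unfolding phi_replicate_0_constant unfolding phi_eq_infsum_exp
    by (simp add: A_def B_def w_def[abs_def])
  finally show ?thesis
    unfolding mu'_def .
qed

theorem lemma3p7:
  fixes j k :: nat and a beta :: "nat list" and t :: real and z :: complex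
  assumes "1 \<le> j" and "j \<le> k"
    and "length a = j" and "length beta = k" and "\<forall>b\<in>set beta. 0 < b"
    and "0 \<le> t" and "Re z < 0"
  shows "phi (a @ replicate (k - j) 0) beta t z =
         series_mult
           (phi a (take (j - 1) beta @ [sum_list (drop (j - 1) beta)]) t z)
           (phi (replicate (k - j) 0) (drop j beta) 0 z)"
proof -
  define mu where "mu = take j beta"
  define nu where "nu = drop j beta"
  have beta: "beta = mu @ nu" and len_nu: "length nu = k - j" and len_mu: "length a = length mu"
    using assms(2-4) by (simp_all add: mu_def nu_def)
  have "mu \<noteq> []"
    using assms(1) len_mu assms(3) by auto
  then have last_mu: "last mu = beta ! (j - 1)"
    using assms(1-4) by (simp add: mu_def last_conv_nth)
  have take_eq: "take (j - 1) beta = butlast mu"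
    using assms(2,4) by (simp add: mu_def butlast_take)
  have sum_eq: "sum_list (drop (j - 1) beta) = last mu + sum_list nu"
    using assms(1-4) last_mu by (simp add: nu_def flip: Cons_nth_drop_Suc)
  have coeff: "phi (a @ replicate (k - j) 0) beta t z e
      = phi a (take (j - 1) beta @ [sum_list (drop (j - 1) beta)]) t z e
        * phi (replicate (k - j) 0) (drop j beta) 0 z (\<lambda>_. 0)" for e
    using len_mu \<open>mu \<noteq> []\<close> assms(5-7)
    unfolding take_eq sum_eq nu_def[symmetric] len_nu[symmetric] unfolding beta
    by (intro phi_append_zeros_coeff) auto
  show ?thesis
    by (rule ext) (simp add: coeff series_mult_constant_right[OF phi_replicate_0_nonconstant phi_eq_0_if_infinite_le])
qed

end
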